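(* Let $\mathcal{H}$ be a hereditary $\sigma$-ring of sets, let $\mu^*$ be an outer measure on $\mathcal{H}$, let $X$ be a set with $X\cap\bigcup\mathcal{H}\neq\emptyset$, and let $\overline{\overline{S}}$ be the class of all $\mu^{**}$-measurable sets. Then $\overline{\overline{S}}$ is a $\sigma$-ring.
   Context: A nonempty class $\mathcal{E}$ of sets is hereditary if $F\in\mathcal{E}$ whenever $E\in\mathcal{E}$ and $F\subseteq E$. A set $E\in\mathcal{H}$ is $\mu^*$-measurable if $\mu^*(A)=\mu^*(A\cap E)+\mu^*(A\cap E')$ for every $A\in\mathcal{H}$, where $E'$ denotes the complement of $E$. Let $\overline{S}$ denote the class of all $\mu^*$-measurable sets. Let $K=\{B\subseteq X: B\cap E\in\mathcal{H}\text{ for all }E\in\mathcal{H}\}$. A set $Q\in K$ is called $\mu^{**}$-measurable if $Q\cap E$ is $\mu^*$-measurable for every $\mu^*$-measurable $E\in\mathcal{H}$, i.e. for all $A\in\mathcal{H}$ and all $E\in\overline{S}$, $\mu^*(A)=\mu^*[A\cap(Q\cap E)]+\mu^*[A\cap(Q\cap E)']$. *)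

theory Defs
  imports "HOL-Analysis.Analysis"
begin

definition sigma_ring :: "'a set set \<Rightarrow> bool" where
  "sigma_ring R \<longleftrightarrow> R \<noteq> {} \<and>
     (\<forall>E\<in>R. \<forall>F\<in>R. E - F \<in> R) \<and>
     (\<forall>A :: nat \<Rightarrow> 'a set. range A \<subseteq> R \<longrightarrow> (\<Union>i. A i) \<in> R)"

definition hereditary :: "'a set set \<Rightarrow> bool" where
  "hereditary H \<longleftrightarrow> H \<noteq> {} \<and> (\<forall>E\<in>H. \<forall>F. F \<subseteq> E \<longrightarrow> F \<in> H)"

definition outer_measure_on :: "'a set set \<Rightarrow> ('a set \<Rightarrow> ennreal) \<Rightarrow> bool" where
  "outer_measure_on H \<mu> \<longleftrightarrow> \<mu> {} = 0 \<and>
     (\<forall>E\<in>H. \<forall>F\<in>H. E \<subseteq> F \<longrightarrow> \<mu> E \<le> \<mu> F) \<and>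
     (\<forall>A :: nat \<Rightarrow> 'a set. range A \<subseteq> H \<longrightarrow> \<mu> (\<Union>i. A i) \<le> (\<Sum>i. \<mu> (A i)))"

definition mu_star_measurable :: "'a set set \<Rightarrow> ('a set \<Rightarrow> ennreal) \<Rightarrow> 'a set \<Rightarrow> bool" where
  "mu_star_measurable H \<mu> E \<longleftrightarrow> E \<in> H \<and>
     (\<forall>A\<in>H. \<mu> A = \<mu> (A \<inter> E) + \<mu> (A \<inter> - E))"

definition Kclass :: "'a set set \<Rightarrow> 'a set \<Rightarrow> 'a set set" where
  "Kclass H X = {B. B \<subseteq> X \<and> (\<forall>E\<in>H. B \<inter> E \<in> H)}"

definition mu_star_star_measurable :: "'a set set \<Rightarrow> ('a set \<Rightarrow> ennreal) \<Rightarrow> 'a set \<Rightarrow> 'a set \<Rightarrow> bool" where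
  "mu_star_star_measurable H \<mu> X Q \<longleftrightarrow> Q \<in> Kclass H X \<and>
     (\<forall>E. mu_star_measurable H \<mu> E \<longrightarrow> mu_star_measurable H \<mu> (Q \<inter> E))"

end

theory Submission
  imports Defs
begin

text \<open>Both defining conditions of \<open>\<mu>\<^sup>*\<^sup>*\<close>-measurability say that \<open>Q\<close> preserves a
  \<sigma>-ring under intersection: the hereditary \<sigma>-ring \<open>H\<close>, and the class of \<open>\<mu>\<^sup>*\<close>-measurable
  sets, which is a \<sigma>-ring by Carath\'eodory's theorem applied inside each \<open>\<Omega> \<in> H\<close>. For any
  \<sigma>-ring \<open>R\<close>, the sets \<open>Q\<close> with \<open>Q \<inter> E \<in> R\<close> for all \<open>E \<in> R\<close> form a \<sigma>-ring, because
  \<open>(Q\<^sub>1 - Q\<^sub>2) \<inter> E = Q\<^sub>1 \<inter> E - Q\<^sub>2 \<inter> E\<close> and \<open>(\<Union>i. Q\<^sub>i) \<inter> E = (\<Union>i. Q\<^sub>i \<inter> E)\<close>. Intersecting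
  these two \<sigma>-rings with \<open>Pow X\<close> gives the class of \<open>\<mu>\<^sup>*\<^sup>*\<close>-measurable sets.\<close>

lemma sigma_ringI:
  assumes "R \<noteq> {}" "\<And>E F. E \<in> R \<Longrightarrow> F \<in> R \<Longrightarrow> E - F \<in> R"
    and "\<And>A :: nat \<Rightarrow> 'a set. range A \<subseteq> R \<Longrightarrow> (\<Union>i. A i) \<in> R"
  shows "sigma_ring R"
  unfolding sigma_ring_def using assms by blast

lemma sigma_ring_Diff: "sigma_ring R \<Longrightarrow> E \<in> R \<Longrightarrow> F \<in> R \<Longrightarrow> E - F \<in> R"
  unfolding sigma_ring_def by blast

lemma sigma_ring_UN: "sigma_ring R \<Longrightarrow> range (A :: nat \<Rightarrow> 'a set) \<subseteq> R \<Longrightarrow> (\<Union>i. A i) \<in> R"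
  unfolding sigma_ring_def by blast

lemma sigma_ring_empty:
  assumes "sigma_ring R"
  shows "{} \<in> R"
proof -
  obtain E where "E \<in> R" using assms unfolding sigma_ring_def by blast
  then have "E - E \<in> R" using sigma_ring_Diff[OF assms] by blast
  then show ?thesis by simp
qed

lemma sigma_ring_Un:
  assumes "sigma_ring R" "A \<in> R" "B \<in> R"
  shows "A \<union> B \<in> R"
proof -
  have "(\<Union>i::nat. if i = 0 then A else B) \<in> R"
    using assms by (intro sigma_ring_UN) auto
  moreover have "(\<Union>i::nat. if i = 0 then A else B) = A \<union> B"
    by (auto split: if_splits)
  ultimately show ?thesis by simp
qed

lemma sigma_ring_Int:
  assumes "sigma_ring R" "sigma_ring S"
  shows "sigma_ring (R \<inter> S)"
proof (rule sigma_ringI)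
  show "R \<inter> S \<noteq> {}" using sigma_ring_empty[OF assms(1)] sigma_ring_empty[OF assms(2)] by blast
  show "E - F \<in> R \<inter> S" if "E \<in> R \<inter> S" "F \<in> R \<inter> S" for E F
    using that sigma_ring_Diff[OF assms(1)] sigma_ring_Diff[OF assms(2)] by blast
  show "(\<Union>i. A i) \<in> R \<inter> S" if "range A \<subseteq> R \<inter> S" for A :: "nat \<Rightarrow> 'a set"
    using that sigma_ring_UN[OF assms(1)] sigma_ring_UN[OF assms(2)] by blast
qed

lemma sigma_ring_Pow: "sigma_ring (Pow X)"
  by (intro sigma_ringI) auto

lemma sigma_ring_Int_closed:
  assumes R: "sigma_ring R"
  shows "sigma_ring {Q. \<forall>E\<in>R. Q \<inter> E \<in> R}"
proof (rule sigma_ringI)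
  have "{} \<in> {Q. \<forall>E\<in>R. Q \<inter> E \<in> R}" using sigma_ring_empty[OF R] by simp
  then show "{Q. \<forall>E\<in>R. Q \<inter> E \<in> R} \<noteq> {}" by blast
next
  fix Q1 Q2 assume Q: "Q1 \<in> {Q. \<forall>E\<in>R. Q \<inter> E \<in> R}" "Q2 \<in> {Q. \<forall>E\<in>R. Q \<inter> E \<in> R}"
  have "(Q1 - Q2) \<inter> E \<in> R" if "E \<in> R" for E
  proof -
    have "Q1 \<inter> E \<in> R" "Q2 \<inter> E \<in> R" using Q that by blast+
    then have "Q1 \<inter> E - Q2 \<inter> E \<in> R" by (rule sigma_ring_Diff[OF R])
    moreover have "(Q1 - Q2) \<inter> E = Q1 \<inter> E - Q2 \<inter> E" by blast
    ultimately show ?thesis by (simp only:)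
  qed
  then show "Q1 - Q2 \<in> {Q. \<forall>E\<in>R. Q \<inter> E \<in> R}" by blast
next
  fix A :: "nat \<Rightarrow> 'a set" assume A: "range A \<subseteq> {Q. \<forall>E\<in>R. Q \<inter> E \<in> R}"
  have "(\<Union>i. A i) \<inter> E \<in> R" if "E \<in> R" for E
  proof -
    have "range (\<lambda>i. A i \<inter> E) \<subseteq> R" using A that by blast
    then have "(\<Union>i. A i \<inter> E) \<in> R" by (rule sigma_ring_UN[OF R])
    moreover have "(\<Union>i. A i) \<inter> E = (\<Union>i. A i \<inter> E)" by blast
    ultimately show ?thesis by (simp only:)
  qed
  then show "(\<Union>i. A i) \<in> {Q. \<forall>E\<in>R. Q \<inter> E \<in> R}" by blast
qed

lemma hereditary_Pow_subset: "hereditary H \<Longrightarrow> \<Omega> \<in> H \<Longrightarrow> Pow \<Omega> \<subseteq> H"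
  unfolding hereditary_def by blast

lemma outer_measure_onD:
  assumes "outer_measure_on H \<mu>"
  shows "\<mu> {} = 0"
    and "E \<in> H \<Longrightarrow> F \<in> H \<Longrightarrow> E \<subseteq> F \<Longrightarrow> \<mu> E \<le> \<mu> F"
    and "range (A :: nat \<Rightarrow> 'a set) \<subseteq> H \<Longrightarrow> \<mu> (\<Union>i. A i) \<le> (\<Sum>i. \<mu> (A i))"
  using assms unfolding outer_measure_on_def by blast+

lemma outer_measure_space_Pow:
  assumes "hereditary H" "outer_measure_on H \<mu>" "\<Omega> \<in> H"
  shows "outer_measure_space (Pow \<Omega>) \<mu>"
proof -
  have Pow: "Pow \<Omega> \<subseteq> H" by (rule hereditary_Pow_subset[OF assms(1,3)])
  have "positive (Pow \<Omega>) \<mu>"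
    unfolding positive_def using outer_measure_onD(1)[OF assms(2)] by simp
  moreover have "increasing (Pow \<Omega>) \<mu>"
    unfolding increasing_def
  proof (intro ballI impI)
    fix E F assume "E \<in> Pow \<Omega>" "F \<in> Pow \<Omega>" "E \<subseteq> F"
    with Pow show "\<mu> E \<le> \<mu> F" by (intro outer_measure_onD(2)[OF assms(2)]) auto
  qed
  moreover have "countably_subadditive (Pow \<Omega>) \<mu>"
    unfolding countably_subadditive_def
  proof (intro allI impI)
    fix A :: "nat \<Rightarrow> 'a set" assume "range A \<subseteq> Pow \<Omega>"
    with Pow have "range A \<subseteq> H" by (rule order_trans[rotated])
    then show "\<mu> (\<Union>i. A i) \<le> (\<Sum>i. \<mu> (A i))" by (rule outer_measure_onD(3)[OF assms(2)])
  qed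
  ultimately show ?thesis unfolding outer_measure_space_def by blast
qed

lemma sigma_algebra_lambda_system_Pow:
  assumes "hereditary H" "outer_measure_on H \<mu>" "\<Omega> \<in> H"
  shows "sigma_algebra \<Omega> (lambda_system \<Omega> (Pow \<Omega>) \<mu>)"
proof -
  interpret sigma_algebra \<Omega> "Pow \<Omega>" by (rule sigma_algebra_Pow)
  have "measure_space \<Omega> (lambda_system \<Omega> (Pow \<Omega>) \<mu>) \<mu>"
    by (rule caratheodory_lemma[OF outer_measure_space_Pow[OF assms]])
  then show ?thesis by (simp add: measure_space_def)
qed

lemma mu_star_measurable_in_lambda_system:
  assumes "hereditary H" "mu_star_measurable H \<mu> E" "\<Omega> \<in> H" "E \<subseteq> \<Omega>"
  shows "E \<in> lambda_system \<Omega> (Pow \<Omega>) \<mu>"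
proof -
  interpret sigma_algebra \<Omega> "Pow \<Omega>" by (rule sigma_algebra_Pow)
  have "\<mu> (A \<inter> E) + \<mu> (A - E) = \<mu> A" if "A \<subseteq> \<Omega>" for A
  proof -
    have "A \<in> H" using that hereditary_Pow_subset[OF assms(1,3)] by blast
    then show ?thesis
      using assms(2) unfolding mu_star_measurable_def by (simp add: Diff_eq)
  qed
  then show ?thesis using assms(4) unfolding lambda_system_eq by blast
qed

text \<open>Measurability is tested one \<open>A \<in> H\<close> at a time, so it suffices to find, for each \<open>A\<close>,
  a single \<open>\<Omega> \<in> H\<close> containing \<open>A\<close> on which \<open>E\<close> is Carath\'eodory measurable.\<close>

lemma mu_star_measurableI_lambda_system:
  assumes "E \<in> H"
    and "\<And>A. A \<in> H \<Longrightarrow> \<exists>\<Omega>\<in>H. A \<subseteq> \<Omega> \<and> E \<in> lambda_system \<Omega> (Pow \<Omega>) \<mu>"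
  shows "mu_star_measurable H \<mu> E"
  unfolding mu_star_measurable_def
proof (intro conjI ballI)
  fix A assume "A \<in> H"
  then obtain \<Omega> where "A \<subseteq> \<Omega>" "E \<in> lambda_system \<Omega> (Pow \<Omega>) \<mu>"
    using assms(2) by blast
  interpret sigma_algebra \<Omega> "Pow \<Omega>" by (rule sigma_algebra_Pow)
  have "\<mu> (A \<inter> E) + \<mu> (A - E) = \<mu> A"
    using \<open>E \<in> lambda_system \<Omega> (Pow \<Omega>) \<mu>\<close> \<open>A \<subseteq> \<Omega>\<close> unfolding lambda_system_eq by blast
  then show "\<mu> A = \<mu> (A \<inter> E) + \<mu> (A \<inter> - E)" by (simp add: Diff_eq)
qed (rule assms(1))

lemma mu_star_measurable_Diff:
  assumes H: "hereditary H" "sigma_ring H" "outer_measure_on H \<mu>"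
    and M: "mu_star_measurable H \<mu> M1" "mu_star_measurable H \<mu> M2"
  shows "mu_star_measurable H \<mu> (M1 - M2)"
proof (rule mu_star_measurableI_lambda_system)
  have "M1 \<in> H" "M2 \<in> H" using M unfolding mu_star_measurable_def by auto
  then show "M1 - M2 \<in> H" by (rule sigma_ring_Diff[OF H(2)])
  fix A assume "A \<in> H"
  define \<Omega> where "\<Omega> = A \<union> (M1 \<union> M2)"
  have \<Omega>: "\<Omega> \<in> H" unfolding \<Omega>_def
    by (rule sigma_ring_Un[OF H(2) \<open>A \<in> H\<close> sigma_ring_Un[OF H(2) \<open>M1 \<in> H\<close> \<open>M2 \<in> H\<close>]])
  interpret L: sigma_algebra \<Omega> "lambda_system \<Omega> (Pow \<Omega>) \<mu>"
    by (rule sigma_algebra_lambda_system_Pow[OF H(1,3) \<Omega>])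
  have "M1 \<in> lambda_system \<Omega> (Pow \<Omega>) \<mu>" "M2 \<in> lambda_system \<Omega> (Pow \<Omega>) \<mu>"
    using mu_star_measurable_in_lambda_system[OF H(1) _ \<Omega>] M unfolding \<Omega>_def by blast+
  then have "M1 - M2 \<in> lambda_system \<Omega> (Pow \<Omega>) \<mu>" by (rule L.Diff)
  moreover have "A \<subseteq> \<Omega>" unfolding \<Omega>_def by blast
  ultimately show "\<exists>\<Omega>\<in>H. A \<subseteq> \<Omega> \<and> M1 - M2 \<in> lambda_system \<Omega> (Pow \<Omega>) \<mu>"
    using \<Omega> by blast
qed

lemma mu_star_measurable_UN:
  fixes M :: "nat \<Rightarrow> 'a set"
  assumes H: "hereditary H" "sigma_ring H" "outer_measure_on H \<mu>"
    and M: "\<And>i. mu_star_measurable H \<mu> (M i)"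
  shows "mu_star_measurable H \<mu> (\<Union>i. M i)"
proof (rule mu_star_measurableI_lambda_system)
  have "range M \<subseteq> H" using M unfolding mu_star_measurable_def by auto
  then show UN: "(\<Union>i. M i) \<in> H" by (rule sigma_ring_UN[OF H(2)])
  fix A assume "A \<in> H"
  define \<Omega> where "\<Omega> = A \<union> (\<Union>i. M i)"
  have \<Omega>: "\<Omega> \<in> H" unfolding \<Omega>_def by (rule sigma_ring_Un[OF H(2) \<open>A \<in> H\<close> UN])
  interpret L: sigma_algebra \<Omega> "lambda_system \<Omega> (Pow \<Omega>) \<mu>"
    by (rule sigma_algebra_lambda_system_Pow[OF H(1,3) \<Omega>])
  have "M i \<in> lambda_system \<Omega> (Pow \<Omega>) \<mu>" for i
    using mu_star_measurable_in_lambda_system[OF H(1) M \<Omega>] unfolding \<Omega>_def by blast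
  then have "(\<Union>i. M i) \<in> lambda_system \<Omega> (Pow \<Omega>) \<mu>" by (intro L.countable_nat_UN) blast
  moreover have "A \<subseteq> \<Omega>" unfolding \<Omega>_def by blast
  ultimately show "\<exists>\<Omega>\<in>H. A \<subseteq> \<Omega> \<and> (\<Union>i. M i) \<in> lambda_system \<Omega> (Pow \<Omega>) \<mu>"
    using \<Omega> by blast
qed

lemma sigma_ring_mu_star_measurable:
  assumes "hereditary H" "sigma_ring H" "outer_measure_on H \<mu>"
  shows "sigma_ring {E. mu_star_measurable H \<mu> E}"
proof (rule sigma_ringI)
  have "{} \<in> H" by (rule sigma_ring_empty[OF assms(2)])
  moreover have "\<mu> {} = 0" by (rule outer_measure_onD(1)[OF assms(3)])
  ultimately have "mu_star_measurable H \<mu> {}" unfolding mu_star_measurable_def by simp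
  then show "{E. mu_star_measurable H \<mu> E} \<noteq> {}" by blast
qed (simp_all add: mu_star_measurable_Diff[OF assms] mu_star_measurable_UN[OF assms] image_subset_iff)

lemma mu_star_star_measurable_eq:
  "{Q. mu_star_star_measurable H \<mu> X Q} =
     Pow X \<inter> {Q. \<forall>E\<in>H. Q \<inter> E \<in> H}
       \<inter> {Q. \<forall>E\<in>{E. mu_star_measurable H \<mu> E}. Q \<inter> E \<in> {E. mu_star_measurable H \<mu> E}}"
  unfolding mu_star_star_measurable_def Kclass_def by auto

theorem theorem3p2:
  fixes H :: "'a set set" and \<mu> :: "'a set \<Rightarrow> ennreal" and X :: "'a set"
  assumes "hereditary H" and "sigma_ring H"
    and "outer_measure_on H \<mu>"
    and "X \<inter> \<Union>H \<noteq> {}"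
  shows "sigma_ring {Q. mu_star_star_measurable H \<mu> X Q}"
  unfolding mu_star_star_measurable_eq
  using assms(1-3)
  by (intro sigma_ring_Int sigma_ring_Pow sigma_ring_Int_closed sigma_ring_mu_star_measurable)

end
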